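(* With $P(X)=\prod_{i=1}^n(X-x_i)=\sum_{i=0}^n a_iX^i$ ($a_n=1$), set $a_i=0$ for $i>n$ and $\alpha_{i,j}=(i+1)a_{i+1}a_j$. Then, as polynomial identities in $X,Y$, $$\Gamma_{\mathbb E}\big(P(X),P(Y)\big)=\sum_{i,j}\Gamma_{\mathbb E}(a_i,a_j)X^iY^j=\frac{P'(X)P(Y)-P'(Y)P(X)}{Y-X}=\sum_{i\ne j}\alpha_{i,j}\,\frac{X^iY^j-X^jY^i}{Y-X}.$$ Moreover, the functions $G^{kp}=\Gamma_{\mathbb E}(a_k,a_p)$ ($0\le k,p\le n-1$) are polynomials in $(a_0,\dots,a_{n-1})$, and regarding them as such, for every $p\in\{0,\dots,n-1\}$, $$\sum_{k=0}^{n-1}\partial_{a_k}\Gamma_{\mathbb E}(a_k,a_p)=-\tfrac12(p+1)(p+2)\,a_{p+2}.$$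
   Context: $\Gamma_{\mathbb E}(f,g)=\sum_i\partial_{x_i}f\,\partial_{x_i}g$ is the Euclidean carré du champ on $\mathbb{R}^n$; the $a_i$ are functions of $x=(x_1,\dots,x_n)$. *)

theory Defs
  imports "HOL-Analysis.Analysis" "HOL-Computational_Algebra.Polynomial"
begin

text \<open>Points of R^n are represented as functions nat => real; only the
  coordinates 0..n-1 are used.\<close>

definition pdiff :: "((nat \<Rightarrow> real) \<Rightarrow> real) \<Rightarrow> nat \<Rightarrow> (nat \<Rightarrow> real) \<Rightarrow> real" where
  "pdiff f k y = deriv (\<lambda>t. f (y(k := t))) (y k)"

definition GammaE :: "nat \<Rightarrow> ((nat \<Rightarrow> real) \<Rightarrow> real) \<Rightarrow> ((nat \<Rightarrow> real) \<Rightarrow> real)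
    \<Rightarrow> (nat \<Rightarrow> real) \<Rightarrow> real" where
  "GammaE n f g x = (\<Sum>k<n. pdiff f k x * pdiff g k x)"

definition rootpoly :: "nat \<Rightarrow> (nat \<Rightarrow> real) \<Rightarrow> real poly" where
  "rootpoly n x = (\<Prod>i<n. [:- x i, 1:])"

text \<open>The coefficient functions a_i (automatically 0 for i > n).\<close>
definition acoef :: "nat \<Rightarrow> nat \<Rightarrow> (nat \<Rightarrow> real) \<Rightarrow> real" where
  "acoef n i x = coeff (rootpoly n x) i"

definition alpha :: "nat \<Rightarrow> nat \<Rightarrow> nat \<Rightarrow> (nat \<Rightarrow> real) \<Rightarrow> real" where
  "alpha n i j x = real (i + 1) * acoef n (i + 1) x * acoef n j x"

definition mpoly_fun :: "nat \<Rightarrow> ((nat \<Rightarrow> real) \<Rightarrow> real) \<Rightarrow> bool" where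
  "mpoly_fun n Q \<longleftrightarrow> (\<exists>S c. finite S \<and>
     (\<forall>y. Q y = (\<Sum>e\<in>S. c e * (\<Prod>i<n. y i ^ e i))))"

definition avec :: "nat \<Rightarrow> (nat \<Rightarrow> real) \<Rightarrow> nat \<Rightarrow> real" where
  "avec n x = (\<lambda>i. if i < n then acoef n i x else 0)"

end

theory Submission
  imports Defs
begin

text \<open>With \<open>D\<^sub>k = \<Prod>\<^sub>i\<^sub>\<noteq>\<^sub>k (X - x\<^sub>i)\<close> one has \<open>\<partial>\<^sub>x\<^sub>k P = -D\<^sub>k\<close>, so
  \<open>\<Gamma>(P(X), P(Y)) = \<Sum>\<^sub>k D\<^sub>k(X) D\<^sub>k(Y)\<close>; comparing coefficients gives the first identity, and
  since \<open>P = (X - x\<^sub>k) D\<^sub>k\<close> and \<open>P' = \<Sum>\<^sub>k D\<^sub>k\<close>, multiplying by \<open>Y - X\<close> gives the Bezoutian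
  \<open>P'(X) P(Y) - P'(Y) P(X)\<close>. The same factorisation yields the recursion
  \<open>G\<^sup>k\<^sup>+\<^sup>1\<^sup>,\<^sup>p = G\<^sup>k\<^sup>,\<^sup>p\<^sup>+\<^sup>1 + \<alpha>\<^sub>k\<^sub>+\<^sub>1\<^sub>,\<^sub>p\<^sub>+\<^sub>1 - \<alpha>\<^sub>p\<^sub>+\<^sub>1\<^sub>,\<^sub>k\<^sub>+\<^sub>1\<close>, which writes \<open>G\<^sup>k\<^sup>p\<close> as an explicit
  quadratic polynomial in the \<open>a\<^sub>i\<close>; differentiating it gives the divergence formula.
  The polynomial is unique because the coefficient map \<open>x \<mapsto> (a\<^sub>0, \<dots>, a\<^sub>n\<^sub>-\<^sub>1)\<close> covers an
  open box: small perturbations of \<open>\<Prod>\<^sub>i (X - i)\<close> still change sign between consecutive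
  half-integers, hence still have \<open>n\<close> real roots.\<close>

section \<open>The carre du champ of \<open>P(X)\<close> and of its coefficients\<close>

definition cofactor :: "nat \<Rightarrow> nat \<Rightarrow> (nat \<Rightarrow> real) \<Rightarrow> real poly" where
  "cofactor n k x = (\<Prod>i\<in>{..<n}-{k}. [:- x i, 1:])"

lemma rootpoly_eq_cofactor: "k < n \<Longrightarrow> rootpoly n x = [:- x k, 1:] * cofactor n k x"
  unfolding rootpoly_def cofactor_def by (simp add: prod.remove)

lemma cofactor_fun_upd [simp]: "cofactor n k (x(k := t)) = cofactor n k x"
  unfolding cofactor_def by (rule prod.cong) auto

lemma rootpoly_fun_upd: "k < n \<Longrightarrow> rootpoly n (x(k := t)) = [:- t, 1:] * cofactor n k x"
  using rootpoly_eq_cofactor[of k n "x(k := t)"] by simp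

lemma degree_cofactor_le: "degree (cofactor n k x) \<le> n"
proof -
  have "degree (cofactor n k x) \<le> (\<Sum>i\<in>{..<n}-{k}. degree [:- x i, 1:])"
    unfolding cofactor_def by (rule order.trans[OF degree_prod_sum_le]) (simp_all add: o_def)
  also have "\<dots> \<le> n" by (simp add: card_Diff1_le[THEN order.trans])
  finally show ?thesis .
qed

lemma degree_rootpoly [simp]: "degree (rootpoly n x) = n"
  unfolding rootpoly_def by (subst degree_prod_sum_eq) auto

lemma lead_coeff_rootpoly [simp]: "coeff (rootpoly n x) n = 1"
  using lead_coeff_prod[of "\<lambda>i. [:- x i, 1:]" "{..<n}"] by (simp add: rootpoly_def[symmetric])

lemma acoef_self [simp]: "acoef n n x = 1"
  by (simp add: acoef_def)

lemma acoef_eq_0: "n < i \<Longrightarrow> acoef n i x = 0"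
  by (simp add: acoef_def coeff_eq_0)

lemma pdiff_poly_rootpoly:
  "k < n \<Longrightarrow> pdiff (\<lambda>x. poly (rootpoly n x) X) k x = - poly (cofactor n k x) X"
proof -
  assume "k < n"
  then have "(\<lambda>t. poly (rootpoly n (x(k := t))) X) = (\<lambda>t. (X - t) * poly (cofactor n k x) X)"
    by (simp add: rootpoly_fun_upd algebra_simps)
  moreover have "((\<lambda>t. (X - t) * poly (cofactor n k x) X)
      has_real_derivative - poly (cofactor n k x) X) (at (x k))"
    by (auto intro!: derivative_eq_intros)
  ultimately show ?thesis unfolding pdiff_def by (simp add: DERIV_imp_deriv)
qed

lemma pdiff_acoef: "k < n \<Longrightarrow> pdiff (acoef n i) k x = - coeff (cofactor n k x) i"
proof -
  assume "k < n"
  then have "(\<lambda>t. acoef n i (x(k := t)))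
      = (\<lambda>t. coeff (pCons 0 (cofactor n k x)) i - t * coeff (cofactor n k x) i)"
    by (auto simp: fun_eq_iff acoef_def rootpoly_fun_upd mult_pCons_left)
  moreover have "((\<lambda>t. coeff (pCons 0 (cofactor n k x)) i - t * coeff (cofactor n k x) i)
      has_real_derivative - coeff (cofactor n k x) i) (at (x k))"
    by (auto intro!: derivative_eq_intros)
  ultimately show ?thesis unfolding pdiff_def by (simp add: DERIV_imp_deriv)
qed

lemma GammaE_poly_rootpoly:
  "GammaE n (\<lambda>x. poly (rootpoly n x) X) (\<lambda>x. poly (rootpoly n x) Y) x
     = (\<Sum>k<n. poly (cofactor n k x) X * poly (cofactor n k x) Y)"
  unfolding GammaE_def by (rule sum.cong) (auto simp: pdiff_poly_rootpoly)

lemma GammaE_acoef: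
  "GammaE n (acoef n i) (acoef n j) x = (\<Sum>k<n. coeff (cofactor n k x) i * coeff (cofactor n k x) j)"
  unfolding GammaE_def by (rule sum.cong) (auto simp: pdiff_acoef)

lemma poly_eq_sum_atMost:
  fixes p :: "'a::{comm_semiring_0,semiring_1} poly"
  assumes "degree p \<le> N"
  shows "poly p X = (\<Sum>i\<le>N. coeff p i * X ^ i)"
proof -
  have "poly p X = (\<Sum>i\<le>degree p. coeff p i * X ^ i)" by (rule poly_altdef)
  also have "\<dots> = (\<Sum>i\<le>N. coeff p i * X ^ i)"
    by (rule sum.mono_neutral_left) (use assms in \<open>auto simp: coeff_eq_0 not_le\<close>)
  finally show ?thesis .
qed

lemma GammaE_poly_rootpoly_expansion:
  "GammaE n (\<lambda>x. poly (rootpoly n x) X) (\<lambda>x. poly (rootpoly n x) Y) x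
     = (\<Sum>i\<le>n. \<Sum>j\<le>n. GammaE n (acoef n i) (acoef n j) x * X ^ i * Y ^ j)"
proof -
  have "(\<Sum>i\<le>n. \<Sum>j\<le>n. GammaE n (acoef n i) (acoef n j) x * X ^ i * Y ^ j)
     = (\<Sum>i\<le>n. \<Sum>j\<le>n. \<Sum>k<n.
          (coeff (cofactor n k x) i * X ^ i) * (coeff (cofactor n k x) j * Y ^ j))"
    by (simp add: GammaE_acoef sum_distrib_left sum_distrib_right algebra_simps)
  also have "\<dots> = (\<Sum>k<n. \<Sum>i\<le>n. \<Sum>j\<le>n.
          (coeff (cofactor n k x) i * X ^ i) * (coeff (cofactor n k x) j * Y ^ j))"
    by (subst sum.swap, subst (2) sum.swap) (rule refl)
  also have "\<dots> = (\<Sum>k<n. poly (cofactor n k x) X * poly (cofactor n k x) Y)"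
    by (simp add: poly_eq_sum_atMost[OF degree_cofactor_le] sum_product)
  finally show ?thesis by (simp add: GammaE_poly_rootpoly)
qed

lemma pderiv_rootpoly: "pderiv (rootpoly n x) = (\<Sum>k<n. cofactor n k x)"
  unfolding rootpoly_def cofactor_def pderiv_prod by (simp add: pderiv_pCons)

text \<open>\<open>D\<^sub>k(X) D\<^sub>k(Y) (Y - X) = D\<^sub>k(X) P(Y) - D\<^sub>k(Y) P(X)\<close> because \<open>P = (X - x\<^sub>k) D\<^sub>k\<close>.\<close>

lemma sum_cofactor_times_diff:
  "(\<Sum>k<n. poly (cofactor n k x) X * poly (cofactor n k x) Y) * (Y - X)
     = poly (pderiv (rootpoly n x)) X * poly (rootpoly n x) Y
       - poly (pderiv (rootpoly n x)) Y * poly (rootpoly n x) X"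
proof -
  have "(\<Sum>k<n. poly (cofactor n k x) X * poly (cofactor n k x) Y) * (Y - X)
     = (\<Sum>k<n. poly (cofactor n k x) X * poly (rootpoly n x) Y
              - poly (cofactor n k x) Y * poly (rootpoly n x) X)"
    unfolding sum_distrib_right by (rule sum.cong) (simp_all add: rootpoly_eq_cofactor algebra_simps)
  also have "\<dots> = poly (pderiv (rootpoly n x)) X * poly (rootpoly n x) Y
       - poly (pderiv (rootpoly n x)) Y * poly (rootpoly n x) X"
    by (simp add: pderiv_rootpoly poly_sum sum_subtractf sum_distrib_right)
  finally show ?thesis .
qed

lemma GammaE_acoef_generating_function:
  assumes "X \<noteq> Y"
  shows "(\<Sum>i\<le>n. \<Sum>j\<le>n. GammaE n (acoef n i) (acoef n j) x * X ^ i * Y ^ j)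
     = (poly (pderiv (rootpoly n x)) X * poly (rootpoly n x) Y
        - poly (pderiv (rootpoly n x)) Y * poly (rootpoly n x) X) / (Y - X)"
  using sum_cofactor_times_diff[of n x X Y] assms
  by (simp add: GammaE_poly_rootpoly_expansion[symmetric] GammaE_poly_rootpoly eq_divide_eq)

lemma pderiv_times_rootpoly_expansion:
  "poly (pderiv (rootpoly n x)) X * poly (rootpoly n x) Y
     = (\<Sum>i\<le>n. \<Sum>j\<le>n. alpha n i j x * X ^ i * Y ^ j)"
proof -
  have deg_P': "degree (pderiv (rootpoly n x)) \<le> n"
    using degree_pderiv[of "rootpoly n x"] by simp
  have deg_P: "degree (rootpoly n x) \<le> n" by simp
  show ?thesis
    unfolding poly_eq_sum_atMost[OF deg_P'] poly_eq_sum_atMost[OF deg_P] sum_product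
    by (simp add: alpha_def coeff_pderiv acoef_def algebra_simps)
qed

lemma bezoutian_alpha_expansion:
  assumes "X \<noteq> Y"
  shows "(poly (pderiv (rootpoly n x)) X * poly (rootpoly n x) Y
          - poly (pderiv (rootpoly n x)) Y * poly (rootpoly n x) X) / (Y - X)
     = (\<Sum>i\<le>n. \<Sum>j\<in>{..n} - {i}. alpha n i j x * (X ^ i * Y ^ j - X ^ j * Y ^ i) / (Y - X))"
proof -
  have "(\<Sum>i\<le>n. \<Sum>j\<in>{..n} - {i}. alpha n i j x * (X ^ i * Y ^ j - X ^ j * Y ^ i) / (Y - X))
      = (\<Sum>i\<le>n. \<Sum>j\<le>n. alpha n i j x * (X ^ i * Y ^ j - X ^ j * Y ^ i) / (Y - X))"
    by (rule sum.cong[OF refl], subst (2) sum.remove) (auto simp: mult.commute)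
  also have "\<dots> = ((\<Sum>i\<le>n. \<Sum>j\<le>n. alpha n i j x * X ^ i * Y ^ j)
                   - (\<Sum>i\<le>n. \<Sum>j\<le>n. alpha n i j x * Y ^ i * X ^ j)) / (Y - X)"
    by (simp add: sum_divide_distrib sum_subtractf[symmetric] algebra_simps)
  finally show ?thesis by (simp add: pderiv_times_rootpoly_expansion)
qed

section \<open>Closed form of \<open>G\<^sup>k\<^sup>p\<close> in the coefficients\<close>

definition alpha_skew :: "(nat \<Rightarrow> real) \<Rightarrow> nat \<Rightarrow> nat \<Rightarrow> real" where
  "alpha_skew a i j = real (i + 1) * a (i + 1) * a j - real (j + 1) * a (j + 1) * a i"

definition gamma_form :: "(nat \<Rightarrow> real) \<Rightarrow> nat \<Rightarrow> nat \<Rightarrow> real" where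
  "gamma_form a k p = (\<Sum>l\<le>k. alpha_skew a (k - l) (p + 1 + l))"

lemma gamma_form_0: "gamma_form a 0 p = alpha_skew a 0 (p + 1)"
  by (simp add: gamma_form_def)

lemma gamma_form_Suc: "gamma_form a (Suc k) p = gamma_form a k (p + 1) + alpha_skew a (Suc k) (p + 1)"
  unfolding gamma_form_def by (subst sum.atMost_Suc_shift) (simp add: add.commute)

lemma sum_coeff_cofactor: "(\<Sum>m<n. coeff (cofactor n m x) i) = real (i + 1) * acoef n (i + 1) x"
proof -
  have "(\<Sum>m<n. coeff (cofactor n m x) i) = coeff (pderiv (rootpoly n x)) i"
    by (simp add: pderiv_rootpoly coeff_sum)
  then show ?thesis by (simp add: coeff_pderiv acoef_def)
qed

text \<open>Eliminating \<open>x\<^sub>m\<close> from \<open>a\<^sub>i = D\<^sub>m\<^sub>,\<^sub>i\<^sub>-\<^sub>1 - x\<^sub>m D\<^sub>m\<^sub>,\<^sub>i\<close> (for \<open>i = k\<close> and \<open>i = p + 1\<close>) gives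
  \<open>D\<^sub>m\<^sub>,\<^sub>k D\<^sub>m\<^sub>,\<^sub>p = D\<^sub>m\<^sub>,\<^sub>k\<^sub>-\<^sub>1 D\<^sub>m\<^sub>,\<^sub>p\<^sub>+\<^sub>1 + a\<^sub>p\<^sub>+\<^sub>1 D\<^sub>m\<^sub>,\<^sub>k - a\<^sub>k D\<^sub>m\<^sub>,\<^sub>p\<^sub>+\<^sub>1\<close>; summing over \<open>m\<close> with
  \<open>\<Sum>\<^sub>m D\<^sub>m = P'\<close> turns the last two terms into \<open>\<alpha>\<^sub>k\<^sub>,\<^sub>p\<^sub>+\<^sub>1 - \<alpha>\<^sub>p\<^sub>+\<^sub>1\<^sub>,\<^sub>k\<close>.\<close>

lemma GammaE_acoef_shift:
  "GammaE n (acoef n k) (acoef n p) x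
     = (\<Sum>m<n. coeff (pCons 0 (cofactor n m x)) k * coeff (cofactor n m x) (p + 1))
       + alpha_skew (\<lambda>i. acoef n i x) k (p + 1)"
proof -
  let ?D = "\<lambda>m. cofactor n m x"
  have "GammaE n (acoef n k) (acoef n p) x
      = (\<Sum>m<n. coeff (pCons 0 (?D m)) k * coeff (?D m) (p + 1)
           + acoef n (p + 1) x * coeff (?D m) k - acoef n k x * coeff (?D m) (p + 1))"
  proof (unfold GammaE_acoef, rule sum.cong[OF refl])
    fix m assume "m \<in> {..<n}"
    then have "acoef n i x = coeff (pCons 0 (?D m)) i - x m * coeff (?D m) i" for i
      by (simp add: acoef_def rootpoly_eq_cofactor mult_pCons_left)
    then have a_k: "acoef n k x = coeff (pCons 0 (?D m)) k - x m * coeff (?D m) k"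
      and a_p: "acoef n (p + 1) x = coeff (?D m) p - x m * coeff (?D m) (p + 1)"
      by simp_all
    show "coeff (?D m) k * coeff (?D m) p = coeff (pCons 0 (?D m)) k * coeff (?D m) (p + 1)
        + acoef n (p + 1) x * coeff (?D m) k - acoef n k x * coeff (?D m) (p + 1)"
      unfolding a_k a_p by (simp add: algebra_simps)
  qed
  also have "\<dots> = (\<Sum>m<n. coeff (pCons 0 (?D m)) k * coeff (?D m) (p + 1))
        + acoef n (p + 1) x * (\<Sum>m<n. coeff (?D m) k) - acoef n k x * (\<Sum>m<n. coeff (?D m) (p + 1))"
    by (simp add: sum.distrib sum_subtractf sum_distrib_left)
  finally show ?thesis
    unfolding sum_coeff_cofactor alpha_skew_def by (simp add: algebra_simps)
qed

lemma GammaE_acoef_eq_gamma_form: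
  "GammaE n (acoef n k) (acoef n p) x = gamma_form (\<lambda>i. acoef n i x) k p"
proof (induction k arbitrary: p)
  case 0
  then show ?case by (simp add: GammaE_acoef_shift gamma_form_0)
next
  case (Suc k)
  have "GammaE n (acoef n (Suc k)) (acoef n p) x
      = GammaE n (acoef n k) (acoef n (p + 1)) x + alpha_skew (\<lambda>i. acoef n i x) (Suc k) (p + 1)"
    unfolding GammaE_acoef_shift[of n "Suc k"] coeff_pCons_Suc GammaE_acoef[of n k "p + 1"] by simp
  then show ?case using Suc by (simp add: gamma_form_Suc)
qed

section \<open>Polynomial functions of the coefficients\<close>

definition monomial_fun :: "nat \<Rightarrow> (nat \<Rightarrow> nat) \<Rightarrow> (nat \<Rightarrow> real) \<Rightarrow> real" where
  "monomial_fun n e y = (\<Prod>i<n. y i ^ e i)"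

lemma monomial_fun_mult:
  "monomial_fun n e y * monomial_fun n f y = monomial_fun n (\<lambda>i. e i + f i) y"
  by (simp add: monomial_fun_def power_add prod.distrib)

lemma mpoly_fun_iff_monomials:
  "mpoly_fun n Q \<longleftrightarrow> (\<exists>S c. finite S \<and> (\<forall>y. Q y = (\<Sum>e\<in>S. c e * monomial_fun n e y)))"
  unfolding mpoly_fun_def monomial_fun_def by simp

lemma mpoly_fun_monomial: "mpoly_fun n (\<lambda>y. c * monomial_fun n e y)"
  unfolding mpoly_fun_iff_monomials by (intro exI[of _ "{e}"] exI[of _ "\<lambda>_. c"]) simp

lemma mpoly_fun_const: "mpoly_fun n (\<lambda>y. c)"
  using mpoly_fun_monomial[of n c "\<lambda>_. 0"] by (simp add: monomial_fun_def)

lemma mpoly_fun_var: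
  assumes "i < n"
  shows "mpoly_fun n (\<lambda>y. y i)"
proof -
  have "monomial_fun n (\<lambda>j. if j = i then 1 else 0) y = (\<Prod>j<n. if j = i then y j else 1)" for y
    unfolding monomial_fun_def by (rule prod.cong) auto
  also have "(\<Prod>j<n. if j = i then y j else 1) = y i" for y
    using assms by (simp add: prod.delta')
  finally show ?thesis using mpoly_fun_monomial[of n 1 "\<lambda>j. if j = i then 1 else 0"] by simp
qed

lemma mpoly_fun_add:
  assumes "mpoly_fun n Q" "mpoly_fun n R"
  shows "mpoly_fun n (\<lambda>y. Q y + R y)"
proof -
  obtain S\<^sub>1 c\<^sub>1 where fin\<^sub>1: "finite S\<^sub>1"
    and Q: "\<And>y. Q y = (\<Sum>e\<in>S\<^sub>1. c\<^sub>1 e * monomial_fun n e y)"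
    using assms(1) unfolding mpoly_fun_iff_monomials by blast
  obtain S\<^sub>2 c\<^sub>2 where fin\<^sub>2: "finite S\<^sub>2"
    and R: "\<And>y. R y = (\<Sum>e\<in>S\<^sub>2. c\<^sub>2 e * monomial_fun n e y)"
    using assms(2) unfolding mpoly_fun_iff_monomials by blast
  let ?S = "S\<^sub>1 \<union> S\<^sub>2"
  have extend: "(\<Sum>e\<in>S. c e * monomial_fun n e y)
      = (\<Sum>e\<in>?S. (if e \<in> S then c e else 0) * monomial_fun n e y)"
    if "S \<subseteq> ?S" for S c y
    using fin\<^sub>1 fin\<^sub>2 that by (intro sum.mono_neutral_cong_left) simp_all
  define c where "c e = (if e \<in> S\<^sub>1 then c\<^sub>1 e else 0) + (if e \<in> S\<^sub>2 then c\<^sub>2 e else 0)" for e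
  have "Q y + R y = (\<Sum>e\<in>?S. c e * monomial_fun n e y)" for y
    unfolding Q R extend[OF Un_upper1] extend[OF Un_upper2] c_def distrib_right sum.distrib ..
  with fin\<^sub>1 fin\<^sub>2 show ?thesis unfolding mpoly_fun_iff_monomials by blast
qed

lemma mpoly_fun_sum:
  "finite A \<Longrightarrow> (\<And>a. a \<in> A \<Longrightarrow> mpoly_fun n (F a)) \<Longrightarrow> mpoly_fun n (\<lambda>y. \<Sum>a\<in>A. F a y)"
  by (induction A rule: finite_induct) (simp_all add: mpoly_fun_const mpoly_fun_add)

lemma mpoly_fun_mult:
  assumes "mpoly_fun n Q" "mpoly_fun n R"
  shows "mpoly_fun n (\<lambda>y. Q y * R y)"
proof -
  obtain S\<^sub>1 c\<^sub>1 where fin\<^sub>1: "finite S\<^sub>1"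
    and Q: "\<And>y. Q y = (\<Sum>e\<in>S\<^sub>1. c\<^sub>1 e * monomial_fun n e y)"
    using assms(1) unfolding mpoly_fun_iff_monomials by blast
  obtain S\<^sub>2 c\<^sub>2 where fin\<^sub>2: "finite S\<^sub>2"
    and R: "\<And>y. R y = (\<Sum>e\<in>S\<^sub>2. c\<^sub>2 e * monomial_fun n e y)"
    using assms(2) unfolding mpoly_fun_iff_monomials by blast
  have "Q y * R y = (\<Sum>e\<in>S\<^sub>1. \<Sum>f\<in>S\<^sub>2. (c\<^sub>1 e * c\<^sub>2 f) * monomial_fun n (\<lambda>i. e i + f i) y)" for y
    unfolding Q R sum_product monomial_fun_mult[symmetric] by (simp only: mult_ac)
  moreover have "mpoly_fun n (\<lambda>y. \<Sum>e\<in>S\<^sub>1. \<Sum>f\<in>S\<^sub>2. (c\<^sub>1 e * c\<^sub>2 f) * monomial_fun n (\<lambda>i. e i + f i) y)"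
    using fin\<^sub>1 fin\<^sub>2 by (intro mpoly_fun_sum mpoly_fun_monomial)
  ultimately show ?thesis by simp
qed
lemma mpoly_fun_diff:
  assumes "mpoly_fun n Q" "mpoly_fun n R"
  shows "mpoly_fun n (\<lambda>y. Q y - R y)"
  using mpoly_fun_add[OF assms(1) mpoly_fun_mult[OF mpoly_fun_const assms(2)], of "- 1"] by simp

definition monic_coeffs :: "nat \<Rightarrow> (nat \<Rightarrow> real) \<Rightarrow> nat \<Rightarrow> real" where
  "monic_coeffs n y i = (if i < n then y i else if i = n then 1 else 0)"

lemma mpoly_fun_monic_coeffs: "mpoly_fun n (\<lambda>y. monic_coeffs n y i)"
  unfolding monic_coeffs_def by (cases "i < n") (simp_all add: mpoly_fun_var mpoly_fun_const)

lemma acoef_eq_monic_coeffs: "acoef n i x = monic_coeffs n (avec n x) i"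
  unfolding monic_coeffs_def avec_def by (auto simp: acoef_eq_0)

definition gamma_mpoly :: "nat \<Rightarrow> nat \<Rightarrow> nat \<Rightarrow> (nat \<Rightarrow> real) \<Rightarrow> real" where
  "gamma_mpoly n k p y = gamma_form (monic_coeffs n y) k p"

lemma mpoly_fun_gamma_mpoly: "mpoly_fun n (gamma_mpoly n k p)"
  unfolding gamma_mpoly_def gamma_form_def alpha_skew_def
  by (intro mpoly_fun_sum mpoly_fun_diff mpoly_fun_mult mpoly_fun_monic_coeffs mpoly_fun_const) simp

lemma GammaE_acoef_eq_gamma_mpoly:
  "GammaE n (acoef n k) (acoef n p) x = gamma_mpoly n k p (avec n x)"
  unfolding GammaE_acoef_eq_gamma_form gamma_mpoly_def acoef_eq_monic_coeffs ..

section \<open>Uniqueness of polynomial expressions in the coefficients\<close>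

lemma mpoly_fun_cong:
  assumes "mpoly_fun n Q" "\<forall>i<n. y i = z i"
  shows "Q y = Q z"
proof -
  obtain S c where Q: "\<And>y. Q y = (\<Sum>e\<in>S. c e * monomial_fun n e y)"
    using assms(1) unfolding mpoly_fun_iff_monomials by blast
  have "monomial_fun n e y = monomial_fun n e z" for e
    unfolding monomial_fun_def using assms(2) by (intro prod.cong) auto
  then show ?thesis by (simp add: Q)
qed

lemma monomial_fun_upd:
  "m < n \<Longrightarrow> monomial_fun n e (y(m := t)) = (\<Prod>i\<in>{..<n}-{m}. y i ^ e i) * t ^ e m"
  unfolding monomial_fun_def by (simp add: prod.remove mult.commute)

lemma mpoly_fun_restrict_line:
  assumes "mpoly_fun n Q" "m < n"
  obtains p :: "real poly" where "\<And>t. Q (y(m := t)) = poly p t"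
proof -
  obtain S c where Q: "\<And>y. Q y = (\<Sum>e\<in>S. c e * monomial_fun n e y)"
    using assms(1) unfolding mpoly_fun_iff_monomials by blast
  show ?thesis
    by (rule that[of "\<Sum>e\<in>S. monom (c e * (\<Prod>i\<in>{..<n}-{m}. y i ^ e i)) (e m)"])
       (simp add: Q monomial_fun_upd[OF assms(2)] poly_sum poly_monom mult.assoc)
qed

text \<open>Induction on the number of coordinates that are allowed to leave the box: along
  each coordinate line the function is a univariate polynomial with infinitely many zeros.\<close>

lemma mpoly_fun_eq_0_on_box:
  assumes Q: "mpoly_fun n Q" and "\<delta> > 0"
    and zero: "\<And>y. \<forall>i<n. \<bar>y i - c i\<bar> < \<delta> \<Longrightarrow> Q y = 0"
  shows "Q y = 0"
proof -
  have "Q y = 0" if "m \<le> n" "\<forall>i. m \<le> i \<and> i < n \<longrightarrow> \<bar>y i - c i\<bar> < \<delta>" for m y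
    using that
  proof (induction m arbitrary: y)
    case 0
    then show ?case using zero by simp
  next
    case (Suc m)
    then have "m < n" by simp
    then obtain p where p: "\<And>t. Q (y(m := t)) = poly p t"
      using mpoly_fun_restrict_line[OF Q, of m y] by blast
    have roots: "{c m - \<delta><..<c m + \<delta>} \<subseteq> {t. poly p t = 0}"
    proof
      fix t assume t: "t \<in> {c m - \<delta><..<c m + \<delta>}"
      have "\<bar>(y(m := t)) i - c i\<bar> < \<delta>" if "m \<le> i" "i < n" for i
      proof (cases "i = m")
        case True
        then show ?thesis using t by (simp add: abs_less_iff)
      next
        case False
        then show ?thesis using Suc.prems(2) that by simp
      qed
      then have "Q (y(m := t)) = 0" using Suc.IH Suc.prems(1) by simp
      then show "t \<in> {t. poly p t = 0}" by (simp add: p)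
    qed
    have "p = 0"
    proof (rule ccontr)
      assume "p \<noteq> 0"
      then have "finite {c m - \<delta><..<c m + \<delta>}"
        using roots poly_roots_finite finite_subset by blast
      moreover have "infinite {c m - \<delta><..<c m + \<delta>}"
        using \<open>\<delta> > 0\<close> by (intro infinite_Ioo) simp
      ultimately show False by contradiction
    qed
    then show ?case using p[of "y m"] by simp
  qed
  from this[of n y] show ?thesis by simp
qed

definition monic_poly :: "nat \<Rightarrow> (nat \<Rightarrow> real) \<Rightarrow> real poly" where
  "monic_poly n y = (\<Sum>i\<le>n. monom (monic_coeffs n y i) i)"

lemma coeff_monic_poly: "coeff (monic_poly n y) i = monic_coeffs n y i"
  unfolding monic_poly_def coeff_sum coeff_monom
  by (cases "i \<le> n") (auto simp: monic_coeffs_def)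

lemma degree_monic_poly_le: "degree (monic_poly n y) \<le> n"
  by (rule degree_le) (auto simp: coeff_monic_poly monic_coeffs_def)

lemma monic_poly_avec: "monic_poly n (avec n x) = rootpoly n x"
  by (rule poly_eqI) (simp add: coeff_monic_poly acoef_eq_monic_coeffs[symmetric] acoef_def)

lemma poly_rootpoly: "poly (rootpoly n x) z = (\<Prod>i<n. z - x i)"
  unfolding rootpoly_def by (simp add: poly_prod)

lemma abs_poly_rootpoly_of_nat_ge: "(1/2) ^ n \<le> \<bar>poly (rootpoly n real) (real j - 1/2)\<bar>"
proof -
  have half: "1/2 \<le> \<bar>real j - 1/2 - real i\<bar>" for i
    by (cases "j \<le> i") auto
  have "(1/2 :: real) ^ n = (\<Prod>i<n. 1/2)" by simp
  also have "\<dots> \<le> (\<Prod>i<n. \<bar>real j - 1/2 - real i\<bar>)"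
    by (intro prod_mono conjI half) simp
  also have "\<dots> = \<bar>poly (rootpoly n real) (real j - 1/2)\<bar>"
    by (simp add: poly_rootpoly abs_prod)
  finally show ?thesis .
qed

lemma poly_rootpoly_of_nat_sign_change:
  assumes "j < n"
  shows "poly (rootpoly n real) (real j - 1/2) * poly (rootpoly n real) (real (Suc j) - 1/2) < 0"
proof -
  let ?f = "\<lambda>i. (real j - 1/2 - real i) * (real j + 1/2 - real i)"
  have "poly (rootpoly n real) (real j - 1/2) * poly (rootpoly n real) (real (Suc j) - 1/2)
      = (\<Prod>i<n. ?f i)"
    by (simp add: poly_rootpoly prod.distrib[symmetric] algebra_simps)
  also have "\<dots> = ?f j * (\<Prod>i\<in>{..<n}-{j}. ?f i)"
    using assms by (simp add: prod.remove)
  also have "\<dots> < 0"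
  proof (rule mult_neg_pos)
    show "?f j < 0" by simp
    show "0 < (\<Prod>i\<in>{..<n}-{j}. ?f i)"
    proof (rule prod_pos)
      fix i assume "i \<in> {..<n}-{j}"
      then have "real i + 1 \<le> real j \<or> real j + 1 \<le> real i" by auto
      then show "0 < ?f i" by (auto intro: mult_pos_pos mult_neg_neg)
    qed
  qed
  finally show ?thesis .
qed

lemma abs_poly_diff_le:
  fixes p q :: "real poly"
  assumes "degree p \<le> n" "degree q \<le> n" "\<And>i. i \<le> n \<Longrightarrow> \<bar>coeff p i - coeff q i\<bar> \<le> \<delta>"
    and "\<bar>s\<bar> \<le> R" "1 \<le> R"
  shows "\<bar>poly p s - poly q s\<bar> \<le> real (n + 1) * \<delta> * R ^ n"
proof -
  have "\<bar>poly p s - poly q s\<bar> = \<bar>\<Sum>i\<le>n. (coeff p i - coeff q i) * s ^ i\<bar>"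
    by (simp add: poly_eq_sum_atMost[OF assms(1)] poly_eq_sum_atMost[OF assms(2)]
        sum_subtractf left_diff_distrib)
  also have "\<dots> \<le> (\<Sum>i\<le>n. \<bar>coeff p i - coeff q i\<bar> * \<bar>s\<bar> ^ i)"
    by (rule order.trans[OF sum_abs]) (simp add: abs_mult power_abs)
  also have "\<dots> \<le> (\<Sum>i\<le>n. \<delta> * R ^ n)"
  proof (rule sum_mono)
    fix i assume i: "i \<in> {..n}"
    have "\<bar>s\<bar> ^ i \<le> R ^ i" by (rule power_mono) (use assms(4) in auto)
    also have "\<dots> \<le> R ^ n" using i assms(5) by (intro power_increasing) auto
    finally show "\<bar>coeff p i - coeff q i\<bar> * \<bar>s\<bar> ^ i \<le> \<delta> * R ^ n"
      using assms(3)[of i] i by (intro mult_mono) auto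
  qed
  also have "\<dots> = real (n + 1) * \<delta> * R ^ n" by simp
  finally show ?thesis .
qed

lemma mult_neg_if_same_sgn:
  fixes a b a' b' :: real
  assumes "a * b < 0" "sgn a' = sgn a" "sgn b' = sgn b"
  shows "a' * b' < 0"
proof -
  have "sgn (a' * b') = sgn (a * b)" using assms(2,3) by (simp add: sgn_mult)
  then show ?thesis using assms(1) sgn_less[of "a' * b'"] sgn_less[of "a * b"] by simp
qed

lemma sgn_eq_if_abs_diff_less:
  fixes a b :: real
  shows "\<bar>b - a\<bar> < \<bar>a\<bar> \<Longrightarrow> sgn b = sgn a"
  by (auto simp: sgn_if abs_if split: if_splits)

text \<open>A perturbation of \<open>\<Prod>(X - i)\<close> smaller than its minimum modulus
  \<open>2\<^sup>-\<^sup>n\<close> at the half-integers keeps all its sign changes there.\<close>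

definition root_stable_radius :: "nat \<Rightarrow> real" where
  "root_stable_radius n = (1/2) ^ n / (2 * (real n + 1) ^ (n + 1))"

lemma root_stable_radius_pos: "0 < root_stable_radius n"
  by (simp add: root_stable_radius_def)

lemma root_stable_radius_scaled:
  "real (n + 1) * root_stable_radius n * (real n + 1) ^ n = (1/2) ^ n / 2"
proof -
  have "(real n + 1) ^ (n + 1) = real (n + 1) * (real n + 1) ^ n" by simp
  moreover have "real (n + 1) * (real n + 1) ^ n > 0" by simp
  ultimately show ?thesis
    unfolding root_stable_radius_def by (simp only:) (simp add: field_simps del: of_nat_Suc)
qed

lemma monic_poly_sign_change_near_rootpoly_of_nat:
  assumes "\<forall>i<n. \<bar>y i - avec n real i\<bar> < root_stable_radius n" and "j < n"
  shows "poly (monic_poly n y) (real j - 1/2) * poly (monic_poly n y) (real (Suc j) - 1/2) < 0"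
proof -
  have sgn: "sgn (poly (monic_poly n y) (real j' - 1/2)) = sgn (poly (rootpoly n real) (real j' - 1/2))"
    if "j' \<le> n" for j'
  proof (rule sgn_eq_if_abs_diff_less)
    have "\<bar>poly (monic_poly n y) (real j' - 1/2) - poly (monic_poly n (avec n real)) (real j' - 1/2)\<bar>
        \<le> real (n + 1) * root_stable_radius n * (real n + 1) ^ n"
    proof (rule abs_poly_diff_le[OF degree_monic_poly_le degree_monic_poly_le])
      fix i
      show "\<bar>coeff (monic_poly n y) i - coeff (monic_poly n (avec n real)) i\<bar> \<le> root_stable_radius n"
        using assms(1) root_stable_radius_pos[of n]
        by (cases "i < n") (simp_all add: coeff_monic_poly monic_coeffs_def less_imp_le)
      show "\<bar>real j' - 1/2\<bar> \<le> real n + 1" using that by linarith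
    qed simp
    also have "\<dots> = (1/2) ^ n / 2"
      by (rule root_stable_radius_scaled)
    also have "\<dots> < (1/2) ^ n" by simp
    also have "\<dots> \<le> \<bar>poly (rootpoly n real) (real j' - 1/2)\<bar>" by (rule abs_poly_rootpoly_of_nat_ge)
    finally show "\<bar>poly (monic_poly n y) (real j' - 1/2) - poly (rootpoly n real) (real j' - 1/2)\<bar>
        < \<bar>poly (rootpoly n real) (real j' - 1/2)\<bar>"
      by (simp add: monic_poly_avec)
  qed
  have "j \<le> n" "Suc j \<le> n" using assms(2) by simp_all
  then show ?thesis
    by (intro mult_neg_if_same_sgn[OF poly_rootpoly_of_nat_sign_change[OF assms(2)]] sgn)
qed

lemma monic_poly_eq_rootpoly:
  assumes "inj_on r {..<n}" "\<And>j. j < n \<Longrightarrow> poly (monic_poly n y) (r j) = 0"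
  shows "monic_poly n y = rootpoly n r"
proof (rule poly_eqI_degree_lead_coeff[where n = n and A = "r ` {..<n}"])
  show "coeff (monic_poly n y) n = coeff (rootpoly n r) n"
    by (simp add: coeff_monic_poly monic_coeffs_def)
  show "n \<le> card (r ` {..<n})" using card_image[OF assms(1)] by simp
  show "degree (monic_poly n y) \<le> n" by (rule degree_monic_poly_le)
  show "degree (rootpoly n r) \<le> n" by simp
  fix z assume "z \<in> r ` {..<n}"
  then show "poly (monic_poly n y) z = poly (rootpoly n r) z"
    using assms(2) by (auto simp: poly_rootpoly)
qed

lemma avec_surj_near_rootpoly_of_nat:
  assumes y: "\<forall>i<n. \<bar>y i - avec n real i\<bar> < root_stable_radius n"
  shows "\<exists>x. \<forall>i<n. avec n x i = y i"
proof -
  define s :: "nat \<Rightarrow> real" where "s j = real j - 1/2" for j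
  have "\<exists>r. s j < r \<and> r < s (Suc j) \<and> poly (monic_poly n y) r = 0" if "j < n" for j
    using poly_IVT[of "s j" "s (Suc j)"] monic_poly_sign_change_near_rootpoly_of_nat[OF y that]
    by (auto simp: s_def)
  then obtain r where r: "\<And>j. j < n \<Longrightarrow> s j < r j \<and> r j < s (Suc j) \<and> poly (monic_poly n y) (r j) = 0"
    by metis
  have "strict_mono_on {..<n} r"
  proof (rule strict_mono_onI)
    fix i j assume "i \<in> {..<n}" "j \<in> {..<n}" "i < j"
    then have "r i < s (Suc i)" "s (Suc i) \<le> s j" "s j < r j" using r by (auto simp: s_def)
    then show "r i < r j" by linarith
  qed
  then have "monic_poly n y = rootpoly n r"
    using r by (intro monic_poly_eq_rootpoly strict_mono_on_imp_inj_on) auto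
  then have "avec n r i = y i" if "i < n" for i
    using that coeff_monic_poly[of n y i] by (simp add: avec_def acoef_def monic_coeffs_def)
  then show ?thesis by blast
qed

lemma mpoly_fun_eq_on_avec_image:
  assumes "mpoly_fun n Q" "mpoly_fun n R" "\<And>x. Q (avec n x) = R (avec n x)"
  shows "Q y = R y"
proof -
  have diff: "mpoly_fun n (\<lambda>y. Q y - R y)" using assms(1,2) by (rule mpoly_fun_diff)
  have "Q y - R y = 0"
  proof (rule mpoly_fun_eq_0_on_box[OF diff])
    show "root_stable_radius n > 0" by (rule root_stable_radius_pos)
    fix y' assume "\<forall>i<n. \<bar>y' i - avec n real i\<bar> < root_stable_radius n"
    then obtain x where "\<forall>i<n. avec n x i = y' i" using avec_surj_near_rootpoly_of_nat by blast
    then have "Q y' - R y' = Q (avec n x) - R (avec n x)"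
      using mpoly_fun_cong[OF diff] by metis
    then show "Q y' - R y' = 0" by (simp add: assms(3))
  qed
  then show ?thesis by simp
qed

section \<open>The divergence formula\<close>

definition kronecker :: "nat \<Rightarrow> nat \<Rightarrow> real" where
  "kronecker k u = (if u = k then 1 else 0)"

definition alpha_skew_deriv :: "(nat \<Rightarrow> real) \<Rightarrow> nat \<Rightarrow> nat \<Rightarrow> nat \<Rightarrow> real" where
  "alpha_skew_deriv a k i j =
     real (i + 1) * (kronecker k (i + 1) * a j + a (i + 1) * kronecker k j)
     - real (j + 1) * (kronecker k (j + 1) * a i + a (j + 1) * kronecker k i)"

lemma fun_upd_has_real_derivative:
  "((\<lambda>t. (a(k := t)) u) has_real_derivative kronecker k u) (at s)"
  by (cases "u = k") (auto simp: kronecker_def intro!: derivative_eq_intros)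

lemma alpha_skew_has_real_derivative:
  "((\<lambda>t. alpha_skew (a(k := t)) i j) has_real_derivative alpha_skew_deriv a k i j) (at (a k))"
  unfolding alpha_skew_def alpha_skew_deriv_def
  by (rule derivative_eq_intros fun_upd_has_real_derivative refl | simp)+ (simp add: algebra_simps)

lemma pdiff_gamma_mpoly:
  assumes "k < n"
  shows "pdiff (gamma_mpoly n k p) k y = (\<Sum>l\<le>k. alpha_skew_deriv (monic_coeffs n y) k (k - l) (p + 1 + l))"
proof -
  let ?a = "monic_coeffs n y"
  have "(\<lambda>t. gamma_mpoly n k p (y(k := t))) = (\<lambda>t. gamma_form (?a(k := t)) k p)"
    unfolding gamma_mpoly_def using assms
    by (intro ext arg_cong[where f = "\<lambda>a. gamma_form a k p"]) (auto simp: monic_coeffs_def)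
  moreover have "y k = ?a k" using assms by (simp add: monic_coeffs_def)
  moreover have "((\<lambda>t. gamma_form (?a(k := t)) k p) has_real_derivative
      (\<Sum>l\<le>k. alpha_skew_deriv ?a k (k - l) (p + 1 + l))) (at (?a k))"
    unfolding gamma_form_def by (intro DERIV_sum alpha_skew_has_real_derivative)
  ultimately show ?thesis unfolding pdiff_def by (simp add: DERIV_imp_deriv)
qed

lemma sum_atMost_eq_single:
  "c \<le> (k::nat) \<Longrightarrow> (\<And>l. l \<le> k \<Longrightarrow> l \<noteq> c \<Longrightarrow> g l = (0::real)) \<Longrightarrow> (\<Sum>l\<le>k. g l) = g c"
  by (subst sum.remove[of _ c]) (auto intro!: sum.neutral)

text \<open>The coefficient of \<open>a\<^sub>p\<^sub>+\<^sub>2\<close> in \<open>\<partial>\<^sub>a\<^sub>k G\<^sup>k\<^sup>p\<close>.\<close>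

definition divergence_weight :: "nat \<Rightarrow> nat \<Rightarrow> real" where
  "divergence_weight p k = real k + (if p + 1 \<le> k then real (p + 2) else 0)
     - (if p + 2 \<le> k then real k else 0) - real (p + 2)"

lemma sum_kronecker_terms:
  "(\<Sum>l\<le>k. real (k - l + 1) * kronecker k (k - l + 1) * a (p + 1 + l)) = real k * a (p + 2)"
  "(\<Sum>l\<le>k. real (k - l + 1) * a (k - l + 1) * kronecker k (p + 1 + l))
      = (if p + 1 \<le> k then real (p + 2) * a (p + 2) else 0)"
  "(\<Sum>l\<le>k. real (p + 1 + l + 1) * kronecker k (p + 1 + l + 1) * a (k - l))
      = (if p + 2 \<le> k then real k * a (p + 2) else 0)"
  "(\<Sum>l\<le>k. real (p + 1 + l + 1) * a (p + 1 + l + 1) * kronecker k (k - l)) = real (p + 2) * a (p + 2)"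
proof -
  show "(\<Sum>l\<le>k. real (k - l + 1) * kronecker k (k - l + 1) * a (p + 1 + l)) = real k * a (p + 2)"
  proof (cases "k = 0")
    case True
    then show ?thesis by (simp add: kronecker_def)
  next
    case False
    then have "(\<Sum>l\<le>k. real (k - l + 1) * kronecker k (k - l + 1) * a (p + 1 + l))
        = real (k - 1 + 1) * kronecker k (k - 1 + 1) * a (p + 1 + 1)"
      by (intro sum_atMost_eq_single) (auto simp: kronecker_def)
    then show ?thesis using False by (simp add: kronecker_def)
  qed
  show "(\<Sum>l\<le>k. real (k - l + 1) * a (k - l + 1) * kronecker k (p + 1 + l))
      = (if p + 1 \<le> k then real (p + 2) * a (p + 2) else 0)"
  proof (cases "p + 1 \<le> k")
    case True
    then have "(\<Sum>l\<le>k. real (k - l + 1) * a (k - l + 1) * kronecker k (p + 1 + l))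
        = real (k - (k - p - 1) + 1) * a (k - (k - p - 1) + 1) * kronecker k (p + 1 + (k - p - 1))"
      by (intro sum_atMost_eq_single) (auto simp: kronecker_def)
    then show ?thesis using True by (simp add: kronecker_def numeral_2_eq_2)
  next
    case False
    then show ?thesis by (auto simp: kronecker_def intro!: sum.neutral)
  qed
  show "(\<Sum>l\<le>k. real (p + 1 + l + 1) * kronecker k (p + 1 + l + 1) * a (k - l))
      = (if p + 2 \<le> k then real k * a (p + 2) else 0)"
  proof (cases "p + 2 \<le> k")
    case True
    then have "(\<Sum>l\<le>k. real (p + 1 + l + 1) * kronecker k (p + 1 + l + 1) * a (k - l))
        = real (p + 1 + (k - p - 2) + 1) * kronecker k (p + 1 + (k - p - 2) + 1) * a (k - (k - p - 2))"
      by (intro sum_atMost_eq_single) (auto simp: kronecker_def)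
    then show ?thesis using True by (simp add: kronecker_def numeral_2_eq_2)
  next
    case False
    then show ?thesis by (auto simp: kronecker_def intro!: sum.neutral)
  qed
  show "(\<Sum>l\<le>k. real (p + 1 + l + 1) * a (p + 1 + l + 1) * kronecker k (k - l)) = real (p + 2) * a (p + 2)"
  proof -
    have "(\<Sum>l\<le>k. real (p + 1 + l + 1) * a (p + 1 + l + 1) * kronecker k (k - l))
        = real (p + 1 + 0 + 1) * a (p + 1 + 0 + 1) * kronecker k (k - 0)"
      by (intro sum_atMost_eq_single) (auto simp: kronecker_def)
    then show ?thesis by (simp add: kronecker_def numeral_2_eq_2)
  qed
qed

lemma sum_alpha_skew_deriv:
  "(\<Sum>l\<le>k. alpha_skew_deriv a k (k - l) (p + 1 + l)) = a (p + 2) * divergence_weight p k"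
proof -
  have "(\<Sum>l\<le>k. alpha_skew_deriv a k (k - l) (p + 1 + l))
     = (\<Sum>l\<le>k. real (k - l + 1) * kronecker k (k - l + 1) * a (p + 1 + l))
       + (\<Sum>l\<le>k. real (k - l + 1) * a (k - l + 1) * kronecker k (p + 1 + l))
       - (\<Sum>l\<le>k. real (p + 1 + l + 1) * kronecker k (p + 1 + l + 1) * a (k - l))
       - (\<Sum>l\<le>k. real (p + 1 + l + 1) * a (p + 1 + l + 1) * kronecker k (k - l))"
    unfolding alpha_skew_deriv_def by (simp add: sum.distrib sum_subtractf algebra_simps)
  also have "\<dots> = a (p + 2) * divergence_weight p k"
    unfolding sum_kronecker_terms divergence_weight_def by (simp add: algebra_simps)
  finally show ?thesis .
qed

lemma sum_lessThan_of_nat: "(\<Sum>k<m. real k) = real m * (real m - 1) / 2"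
  by (induction m) (simp_all add: field_simps)

lemma sum_divergence_weight:
  "p + 2 \<le> n \<Longrightarrow> (\<Sum>k<n. divergence_weight p k) = - (1/2) * real ((p + 1) * (p + 2))"
proof (induction n rule: dec_induct)
  case base
  have "(\<Sum>k<p + 2. divergence_weight p k) = (\<Sum>k<p + 1. divergence_weight p k) + real (p + 1)"
    by (simp add: divergence_weight_def)
  also have "(\<Sum>k<p + 1. divergence_weight p k) = (\<Sum>k<p + 1. real k - real (p + 2))"
    by (rule sum.cong) (auto simp: divergence_weight_def)
  also have "\<dots> = real (p + 1) * (real (p + 1) - 1) / 2 - real (p + 1) * real (p + 2)"
    by (simp add: sum_subtractf sum_lessThan_of_nat) (simp add: right_diff_distrib distrib_right)
  finally show ?case by (simp add: algebra_simps)
next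
  case (step m)
  then show ?case by (simp add: divergence_weight_def)
qed

lemma sum_pdiff_gamma_mpoly:
  assumes "p < n"
  shows "(\<Sum>k<n. pdiff (gamma_mpoly n k p) k y) = - (1/2) * real ((p + 1) * (p + 2)) * monic_coeffs n y (p + 2)"
proof -
  have "(\<Sum>k<n. pdiff (gamma_mpoly n k p) k y) = (\<Sum>k<n. monic_coeffs n y (p + 2) * divergence_weight p k)"
  proof (rule sum.cong[OF refl])
    fix k assume "k \<in> {..<n}"
    then have "k < n" by simp
    show "pdiff (gamma_mpoly n k p) k y = monic_coeffs n y (p + 2) * divergence_weight p k"
      unfolding pdiff_gamma_mpoly[OF \<open>k < n\<close>] sum_alpha_skew_deriv by (rule refl)
  qed
  also have "\<dots> = monic_coeffs n y (p + 2) * (\<Sum>k<n. divergence_weight p k)"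
    by (rule sum_distrib_left[symmetric])
  also have "\<dots> = - (1/2) * real ((p + 1) * (p + 2)) * monic_coeffs n y (p + 2)"
  proof (cases "p + 2 \<le> n")
    case True
    then show ?thesis by (simp add: sum_divergence_weight)
  next
    case False
    then have "monic_coeffs n y (p + 2) = 0" using assms by (simp add: monic_coeffs_def)
    then show ?thesis by simp
  qed
  finally show ?thesis .
qed

lemma GammaE_acoef_mpoly_fun:
  "\<exists>Q. mpoly_fun n Q \<and> (\<forall>x. GammaE n (acoef n k) (acoef n p) x = Q (avec n x))"
  using mpoly_fun_gamma_mpoly GammaE_acoef_eq_gamma_mpoly by blast

lemma sum_pdiff_GammaE_acoef:
  assumes poly: "\<And>k. k < n \<Longrightarrow> mpoly_fun n (Q k)"
    and Gamma: "\<And>k x. k < n \<Longrightarrow> GammaE n (acoef n k) (acoef n p) x = Q k (avec n x)"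
    and "p < n"
  shows "(\<Sum>k<n. pdiff (Q k) k (avec n x)) = - (1/2) * real ((p + 1) * (p + 2)) * acoef n (p + 2) x"
proof -
  have "Q k = gamma_mpoly n k p" if "k < n" for k
  proof (rule ext, rule mpoly_fun_eq_on_avec_image[OF poly[OF that] mpoly_fun_gamma_mpoly])
    show "Q k (avec n x) = gamma_mpoly n k p (avec n x)" for x
      using Gamma[OF that, of x] by (simp add: GammaE_acoef_eq_gamma_mpoly)
  qed
  then have "(\<Sum>k<n. pdiff (Q k) k (avec n x)) = (\<Sum>k<n. pdiff (gamma_mpoly n k p) k (avec n x))"
    by simp
  also have "\<dots> = - (1/2) * real ((p + 1) * (p + 2)) * acoef n (p + 2) x"
    unfolding sum_pdiff_gamma_mpoly[OF \<open>p < n\<close>] acoef_eq_monic_coeffs ..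
  finally show ?thesis .
qed

theorem mainTheorem3:
  fixes n :: nat
  shows
   "(\<forall>x X Y.
      GammaE n (\<lambda>x. poly (rootpoly n x) X) (\<lambda>x. poly (rootpoly n x) Y) x
        = (\<Sum>i\<le>n. \<Sum>j\<le>n. GammaE n (acoef n i) (acoef n j) x * X ^ i * Y ^ j)
      \<and> (X \<noteq> Y \<longrightarrow>
          (\<Sum>i\<le>n. \<Sum>j\<le>n. GammaE n (acoef n i) (acoef n j) x * X ^ i * Y ^ j)
            = (poly (pderiv (rootpoly n x)) X * poly (rootpoly n x) Y
               - poly (pderiv (rootpoly n x)) Y * poly (rootpoly n x) X) / (Y - X)
          \<and> (poly (pderiv (rootpoly n x)) X * poly (rootpoly n x) Y
               - poly (pderiv (rootpoly n x)) Y * poly (rootpoly n x) X) / (Y - X)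
            = (\<Sum>i\<le>n. \<Sum>j\<in>{..n} - {i}.
                 alpha n i j x * (X ^ i * Y ^ j - X ^ j * Y ^ i) / (Y - X))))
    \<and> (\<forall>k<n. \<forall>p<n. \<exists>Q. mpoly_fun n Q \<and>
          (\<forall>x. GammaE n (acoef n k) (acoef n p) x = Q (avec n x)))
    \<and> (\<forall>Q :: nat \<Rightarrow> nat \<Rightarrow> (nat \<Rightarrow> real) \<Rightarrow> real.
          (\<forall>k<n. \<forall>p<n. mpoly_fun n (Q k p) \<and>
             (\<forall>x. GammaE n (acoef n k) (acoef n p) x = Q k p (avec n x)))
          \<longrightarrow> (\<forall>x. \<forall>p<n.
                (\<Sum>k<n. pdiff (Q k p) k (avec n x))
                  = - (1/2) * real ((p + 1) * (p + 2)) * acoef n (p + 2) x))"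
proof (intro conjI allI impI)
  fix x X Y
  show "GammaE n (\<lambda>x. poly (rootpoly n x) X) (\<lambda>x. poly (rootpoly n x) Y) x
      = (\<Sum>i\<le>n. \<Sum>j\<le>n. GammaE n (acoef n i) (acoef n j) x * X ^ i * Y ^ j)"
    by (rule GammaE_poly_rootpoly_expansion)
  assume "X \<noteq> Y"
  then show "(\<Sum>i\<le>n. \<Sum>j\<le>n. GammaE n (acoef n i) (acoef n j) x * X ^ i * Y ^ j)
      = (poly (pderiv (rootpoly n x)) X * poly (rootpoly n x) Y
         - poly (pderiv (rootpoly n x)) Y * poly (rootpoly n x) X) / (Y - X)"
    and "(poly (pderiv (rootpoly n x)) X * poly (rootpoly n x) Y
         - poly (pderiv (rootpoly n x)) Y * poly (rootpoly n x) X) / (Y - X)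
      = (\<Sum>i\<le>n. \<Sum>j\<in>{..n} - {i}. alpha n i j x * (X ^ i * Y ^ j - X ^ j * Y ^ i) / (Y - X))"
    by (rule GammaE_acoef_generating_function bezoutian_alpha_expansion)+
next
  fix k p :: nat
  show "\<exists>Q. mpoly_fun n Q \<and> (\<forall>x. GammaE n (acoef n k) (acoef n p) x = Q (avec n x))"
    by (rule GammaE_acoef_mpoly_fun)
next
  fix Q :: "nat \<Rightarrow> nat \<Rightarrow> (nat \<Rightarrow> real) \<Rightarrow> real" and x p
  assume Q: "\<forall>k<n. \<forall>p<n. mpoly_fun n (Q k p) \<and>
      (\<forall>x. GammaE n (acoef n k) (acoef n p) x = Q k p (avec n x))" and "p < n"
  show "(\<Sum>k<n. pdiff (Q k p) k (avec n x)) = - (1/2) * real ((p + 1) * (p + 2)) * acoef n (p + 2) x"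
  proof (rule sum_pdiff_GammaE_acoef[OF _ _ \<open>p < n\<close>])
    show "mpoly_fun n (Q k p)" if "k < n" for k
      using Q \<open>p < n\<close> that by blast
    show "GammaE n (acoef n k) (acoef n p) x' = Q k p (avec n x')" if "k < n" for k x'
      using Q \<open>p < n\<close> that by blast
  qed
qed

end
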